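(* Let $n\ge 2$ be an integer and $A\subseteq L_n$. The space $(X_n,\tau(A))$ is locally compact if and only if $A=L_n$ (i.e. $\tau(A)$ is the Euclidean topology on $X_n$).
   Context: For $\overline{x},\overline{a}\in\mathbb R^n$ let $|\overline{x}-\overline{a}|$ be the Euclidean distance and $B(\overline{a},\epsilon)=\{\overline{x}\in\mathbb R^n:|\overline{x}-\overline{a}|<\epsilon\}$. Let $P_n=\{\overline{x}\in\mathbb R^n: x_n>0\}$, $L_n=\{\overline{x}\in\mathbb R^n: x_n=0\}$, $X_n=P_n\cup L_n$. For $\overline{a}\in L_n$ and $\epsilon>0$ put $\overline{a(\epsilon)}=(a_1,\dots,a_{n-1},\epsilon)$ and $\tilde B(\overline{a},\epsilon)=\{\overline{a}\}\cup B(\overline{a(\epsilon)},\epsilon)$. For $A\subseteq L_n$, the topology $\tau(A)$ on $X_n$ is generated by the local bases: at $\overline{a}\in P_n$, the sets $B(\overline{a},\epsilon)$ with $0<\epsilon<a_n$; at $\overline{a}\in A$, the sets $B(\overline{a},\epsilon)\cap X_n$ with $\epsilon>0$; at $\overline{a}\in L_n\setminus A$, the sets $\tilde B(\overline{a},\epsilon)$ with $\epsilon>0$. Note $\tau(L_n)$ is the Euclidean topology on $X_n$. *)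

theory Defs
  imports "HOL-Analysis.Analysis"
begin

text \<open>Euclidean n-space R^n is modelled as 'a \<times> real, where 'a is a Euclidean space
  of dimension n-1 (\<ge> 1 automatically, so n \<ge> 2); the last coordinate x_n is snd.
  The product metric on 'a \<times> real is the Euclidean one.\<close>

definition Pn :: "('a::euclidean_space \<times> real) set" where
  "Pn = {x. snd x > 0}"

definition Ln :: "('a::euclidean_space \<times> real) set" where
  "Ln = {x. snd x = 0}"

definition Xn :: "('a::euclidean_space \<times> real) set" where
  "Xn = Pn \<union> Ln"

definition shift_pt :: "'a::euclidean_space \<times> real \<Rightarrow> real \<Rightarrow> 'a \<times> real" where
  "shift_pt a e = (fst a, e)"

definition tball :: "'a::euclidean_space \<times> real \<Rightarrow> real \<Rightarrow> ('a \<times> real) set" where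
  "tball a e = insert a (ball (shift_pt a e) e)"

definition tau :: "('a::euclidean_space \<times> real) set \<Rightarrow> ('a \<times> real) topology" where
  "tau A = topology (\<lambda>U. U \<subseteq> Xn \<and>
     (\<forall>p\<in>U.
        (p \<in> Pn \<longrightarrow> (\<exists>e. 0 < e \<and> e < snd p \<and> ball p e \<subseteq> U)) \<and>
        (p \<in> A \<longrightarrow> (\<exists>e>0. ball p e \<inter> Xn \<subseteq> U)) \<and>
        (p \<in> Ln - A \<longrightarrow> (\<exists>e>0. tball p e \<subseteq> U))))"

end

theory Submission
  imports Defs
begin

text \<open>For A = L_n the topology is the Euclidean one on the closed set X_n, hence locally
  compact. Conversely, let a \<in> L_n - A and let K be \<tau>(A)-compact with a tangent ball
  B~(a,e) \<subseteq> K. Removing the open set B~(a,e/2) leaves a \<tau>(A)-compact set, which is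
  Euclidean compact because \<tau>(A) refines the Euclidean topology, hence closed. But
  B~(a,e) - B~(a,e/2) contains points Euclidean-close to a, so a would lie in the removed set.\<close>

text \<open>The basic neighbourhoods of \<tau>(A) in one formula: at points of P_n the set
  ball p e \<inter> X_n is the Euclidean ball once e \<le> x_n.\<close>
definition tau_nbhd :: "('a::euclidean_space \<times> real) set \<Rightarrow> 'a \<times> real \<Rightarrow> real \<Rightarrow> ('a \<times> real) set" where
  "tau_nbhd A p e = (if p \<in> Ln - A then tball p e else ball p e \<inter> Xn)"

lemma snd_pos_in_shifted_ball:
  fixes a :: "'a::euclidean_space \<times> real"
  assumes "x \<in> ball (shift_pt a e) e"
  shows "0 < snd x"
proof -
  have "dist (snd (shift_pt a e)) (snd x) \<le> dist (shift_pt a e) x"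
    by (rule dist_snd_le)
  then show ?thesis using assms by (auto simp: shift_pt_def dist_real_def)
qed

lemma tball_subset_Xn:
  assumes "a \<in> Ln"
  shows "tball a e \<subseteq> Xn"
  using assms snd_pos_in_shifted_ball[of _ a e] by (auto simp: tball_def Xn_def Pn_def)

lemma tball_mono:
  fixes a :: "'a::euclidean_space \<times> real"
  assumes "e' \<le> e"
  shows "tball a e' \<subseteq> tball a e"
proof -
  have "dist (shift_pt a e) (shift_pt a e') = e - e'"
    using assms by (simp add: shift_pt_def dist_Pair_Pair dist_real_def)
  then have "ball (shift_pt a e') e' \<subseteq> ball (shift_pt a e) e"
    by (subst ball_subset_ball_iff) (auto simp: dist_commute)
  then show ?thesis by (auto simp: tball_def)
qed

lemma tball_subset_ball:
  fixes a :: "'a::euclidean_space \<times> real"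
  assumes "a \<in> Ln" "0 < e"
  shows "tball a e \<subseteq> ball a (2 * e)"
proof -
  have "dist a (shift_pt a e) = e"
    using assms by (cases a) (simp add: shift_pt_def dist_Pair_Pair Ln_def)
  then have "ball (shift_pt a e) e \<subseteq> ball a (2 * e)"
    by (subst ball_subset_ball_iff) (auto simp: dist_commute)
  then show ?thesis using assms by (auto simp: tball_def)
qed

lemma in_shifted_ball_iff:
  fixes a y :: "'a::euclidean_space \<times> real"
  assumes "0 < r"
  shows "y \<in> ball (shift_pt a r) r \<longleftrightarrow> (dist (fst a) (fst y))\<^sup>2 + (snd y)\<^sup>2 < 2 * r * snd y"
proof -
  have "y \<in> ball (shift_pt a r) r \<longleftrightarrow> sqrt ((dist (fst a) (fst y))\<^sup>2 + (r - snd y)\<^sup>2) < sqrt (r\<^sup>2)"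
    using assms by (cases y) (simp add: shift_pt_def dist_Pair_Pair dist_real_def)
  also have "\<dots> \<longleftrightarrow> (dist (fst a) (fst y))\<^sup>2 + (snd y)\<^sup>2 < 2 * r * snd y"
    unfolding real_sqrt_less_iff power2_diff by linarith
  finally show ?thesis .
qed

lemma ball_subset_Pn:
  fixes p :: "'a::euclidean_space \<times> real"
  assumes "e \<le> snd p"
  shows "ball p e \<subseteq> Pn"
proof
  fix x assume "x \<in> ball p e"
  moreover have "dist (snd p) (snd x) \<le> dist p x" by (rule dist_snd_le)
  ultimately show "x \<in> Pn" using assms by (auto simp: Pn_def dist_real_def)
qed

lemma tau_local_condition_iff:
  fixes p :: "'a::euclidean_space \<times> real"
  assumes "A \<subseteq> Ln" "p \<in> Xn"
  shows "((p \<in> Pn \<longrightarrow> (\<exists>e. 0 < e \<and> e < snd p \<and> ball p e \<subseteq> U)) \<and>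
          (p \<in> A \<longrightarrow> (\<exists>e>0. ball p e \<inter> Xn \<subseteq> U)) \<and>
          (p \<in> Ln - A \<longrightarrow> (\<exists>e>0. tball p e \<subseteq> U)))
         \<longleftrightarrow> (\<exists>e>0. tau_nbhd A p e \<subseteq> U)"
proof (cases "p \<in> Pn")
  case True
  then have p: "0 < snd p" "p \<notin> Ln" by (auto simp: Pn_def Ln_def)
  have "(\<exists>e. 0 < e \<and> e < snd p \<and> ball p e \<subseteq> U) \<longleftrightarrow> (\<exists>e>0. ball p e \<inter> Xn \<subseteq> U)"
  proof
    assume "\<exists>e>0. ball p e \<inter> Xn \<subseteq> U"
    then obtain e where e: "0 < e" "ball p e \<inter> Xn \<subseteq> U" by blast
    have "ball p (min e (snd p / 2)) \<subseteq> Pn"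
      using p by (intro ball_subset_Pn) auto
    then have "ball p (min e (snd p / 2)) \<subseteq> ball p e \<inter> Xn"
      by (auto simp: Xn_def)
    then show "\<exists>e. 0 < e \<and> e < snd p \<and> ball p e \<subseteq> U"
      using e p by (intro exI[of _ "min e (snd p / 2)"]) auto
  qed blast
  then show ?thesis using True p assms(1) by (auto simp: tau_nbhd_def)
next
  case False
  then show ?thesis using assms(2) by (auto simp: tau_nbhd_def Xn_def)
qed

lemma tau_nbhd_mono:
  assumes "e' \<le> e"
  shows "tau_nbhd A p e' \<subseteq> tau_nbhd A p e"
  using assms tball_mono[of e' e p] by (auto simp: tau_nbhd_def)

lemma tau_nbhd_subset_ball:
  fixes p :: "'a::euclidean_space \<times> real"
  assumes "p \<in> Xn" "0 < e"
  shows "tau_nbhd A p e \<subseteq> ball p (2 * e) \<inter> Xn"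
  using assms tball_subset_ball[of p e] tball_subset_Xn[of p e] by (auto simp: tau_nbhd_def)

lemma openin_tau:
  fixes A :: "('a::euclidean_space \<times> real) set"
  assumes "A \<subseteq> Ln"
  shows "openin (tau A) U \<longleftrightarrow> U \<subseteq> Xn \<and> (\<forall>p\<in>U. \<exists>e>0. tau_nbhd A p e \<subseteq> U)"
proof -
  define P where "P U \<longleftrightarrow> U \<subseteq> Xn \<and> (\<forall>p\<in>U. \<exists>e>0. tau_nbhd A p e \<subseteq> U)" for U
  have "tau A = topology P"
    unfolding tau_def P_def using tau_local_condition_iff[OF assms]
    by (intro arg_cong[where f = topology] ext) blast
  moreover have "istopology P"
    unfolding istopology_def
  proof (intro conjI allI impI)
    fix S T assume "P S" "P T"
    show "P (S \<inter> T)"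
      unfolding P_def
    proof (intro conjI ballI)
      fix p assume "p \<in> S \<inter> T"
      then obtain e1 e2 where "0 < e1" "tau_nbhd A p e1 \<subseteq> S" "0 < e2" "tau_nbhd A p e2 \<subseteq> T"
        using \<open>P S\<close> \<open>P T\<close> unfolding P_def by blast
      then show "\<exists>e>0. tau_nbhd A p e \<subseteq> S \<inter> T"
        using tau_nbhd_mono[of "min e1 e2" e1 A p] tau_nbhd_mono[of "min e1 e2" e2 A p]
        by (intro exI[of _ "min e1 e2"]) auto
    qed (use \<open>P S\<close> in \<open>auto simp: P_def\<close>)
  next
    fix \<K> assume "\<forall>S\<in>\<K>. P S"
    then show "P (\<Union>\<K>)" unfolding P_def by fast
  qed
  ultimately show ?thesis by (simp add: P_def)
qed

lemma openin_tau_if_openin_Xn: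
  fixes A :: "('a::euclidean_space \<times> real) set"
  assumes "A \<subseteq> Ln" "openin (top_of_set Xn) V"
  shows "openin (tau A) V"
  unfolding openin_tau[OF assms(1)]
proof (intro conjI ballI)
  show "V \<subseteq> Xn" using assms(2) by (simp add: openin_contains_ball)
next
  fix p assume "p \<in> V"
  then obtain e where e: "0 < e" "ball p e \<inter> Xn \<subseteq> V"
    using assms(2) by (auto simp: openin_contains_ball)
  moreover have "p \<in> Xn" using \<open>p \<in> V\<close> assms(2) by (auto simp: openin_contains_ball)
  ultimately have "tau_nbhd A p (e/2) \<subseteq> V" using tau_nbhd_subset_ball[of p "e/2" A] by auto
  then show "\<exists>e>0. tau_nbhd A p e \<subseteq> V" using e(1) half_gt_zero by blast
qed

lemma topspace_tau:
  fixes A :: "('a::euclidean_space \<times> real) set"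
  assumes "A \<subseteq> Ln"
  shows "topspace (tau A) = Xn"
proof
  show "topspace (tau A) \<subseteq> Xn"
    using openin_topspace[of "tau A"] by (simp only: openin_tau[OF assms])
  show "Xn \<subseteq> topspace (tau A)"
    using openin_tau_if_openin_Xn[OF assms openin_topspace[of "top_of_set Xn"]]
    by (simp add: openin_subset)
qed

lemma tau_Ln: "tau Ln = top_of_set (Xn :: ('a::euclidean_space \<times> real) set)"
  by (simp add: topology_eq openin_tau openin_contains_ball tau_nbhd_def)

lemma closed_Xn: "closed (Xn :: ('a::euclidean_space \<times> real) set)"
proof -
  have Xn_eq: "Xn = {x :: 'a \<times> real. 0 \<le> snd x}" by (auto simp: Xn_def Pn_def Ln_def)
  show ?thesis unfolding Xn_eq by (intro closed_Collect_le continuous_intros)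
qed

lemma compact_if_compactin_tau:
  fixes A :: "('a::euclidean_space \<times> real) set"
  assumes "A \<subseteq> Ln" "compactin (tau A) K"
  shows "compact K"
proof -
  have "continuous_map (tau A) (top_of_set Xn) id"
    using topology_finer_continuous_id[of "top_of_set Xn" "tau A"]
      openin_tau_if_openin_Xn[OF assms(1)] topspace_tau[OF assms(1)] by simp
  then have "compactin (top_of_set Xn) K"
    using image_compactin[OF assms(2)] by fastforce
  then show ?thesis by (simp add: compactin_subtopology)
qed

lemma openin_tau_tball:
  fixes a :: "'a::euclidean_space \<times> real"
  assumes "A \<subseteq> Ln" "a \<in> Ln - A" "0 < r"
  shows "openin (tau A) (tball a r)"
  unfolding openin_tau[OF assms(1)]
proof (intro conjI ballI)
  show "tball a r \<subseteq> Xn" using assms(2) tball_subset_Xn by blast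
next
  fix p assume p: "p \<in> tball a r"
  show "\<exists>e>0. tau_nbhd A p e \<subseteq> tball a r"
  proof (cases "p = a")
    case True
    then show ?thesis using assms by (auto simp: tau_nbhd_def)
  next
    case False
    then have "p \<in> ball (shift_pt a r) r" using p by (simp add: tball_def)
    then obtain e where "0 < e" "ball p e \<subseteq> ball (shift_pt a r) r"
      using open_contains_ball_eq[OF open_ball] by blast
    moreover have "p \<notin> Ln"
      using snd_pos_in_shifted_ball[OF \<open>p \<in> ball (shift_pt a r) r\<close>] by (simp add: Ln_def)
    ultimately show ?thesis by (auto simp: tau_nbhd_def tball_def)
  qed
qed

lemma tball_points_near_centre:
  fixes a :: "'a::euclidean_space \<times> real"
  assumes "a \<in> Ln" "0 < e" "0 < d"
  obtains y where "y \<in> tball a e" "y \<notin> tball a (e/2)" "dist y a < d"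
proof -
  obtain u :: 'a where u: "u \<in> Basis" using nonempty_Basis by blast
  define t where "t = min (e/2) (d/2)"
  \<comment> \<open>at height t^2/e the point lies strictly between the tangent spheres of radii e/2 and e\<close>
  define y where "y = (fst a + t *\<^sub>R u, t\<^sup>2 / e)"
  have t: "0 < t" "t \<le> e/2" "t \<le> d/2" using assms by (auto simp: t_def)
  have dist_fst: "dist (fst a) (fst y) = t" using u t by (simp add: y_def dist_norm)
  have snd_y: "0 < snd y" "snd y \<le> t/2" "e * snd y = t\<^sup>2"
    using t assms(2) by (auto simp: y_def power2_eq_square field_simps)
  have "(snd y)\<^sup>2 < t\<^sup>2" using snd_y t by (simp add: power_strict_mono)
  then have "(dist (fst a) (fst y))\<^sup>2 + (snd y)\<^sup>2 < 2 * e * snd y"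
    using snd_y dist_fst by simp
  then have "y \<in> ball (shift_pt a e) e"
    using in_shifted_ball_iff[OF assms(2), of y a] by blast
  moreover have "\<not> (dist (fst a) (fst y))\<^sup>2 + (snd y)\<^sup>2 < 2 * (e/2) * snd y"
    using snd_y dist_fst by simp
  then have "y \<notin> ball (shift_pt a (e/2)) (e/2)"
    using in_shifted_ball_iff[of "e/2" y a] assms(2) by auto
  moreover have "y \<noteq> a" using snd_y assms(1) by (auto simp: Ln_def)
  moreover have "(snd y)\<^sup>2 \<le> (t/2)\<^sup>2" using snd_y by (simp add: power_mono)
  then have "(dist (fst y) (fst a))\<^sup>2 + (dist (snd y) (snd a))\<^sup>2 < (2 * t)\<^sup>2"
    using dist_fst assms(1)
    by (simp add: dist_commute dist_real_def Ln_def power_mult_distrib power_divide)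
       (use zero_less_power[OF \<open>0 < t\<close>, of 2] in linarith)
  then have "dist y a < 2 * t"
    using t by (cases y, cases a) (simp add: dist_Pair_Pair real_less_lsqrt)
  ultimately show thesis
    using that t by (simp add: tball_def)
qed

lemma tball_not_subset_compactin:
  fixes a :: "'a::euclidean_space \<times> real"
  assumes "A \<subseteq> Ln" "a \<in> Ln - A" "0 < e" "compactin (tau A) K" "tball a e \<subseteq> K"
  shows False
proof -
  define C where "C = K - tball a (e/2)"
  have "closedin (tau A) (topspace (tau A) - tball a (e/2))"
    using openin_tau_tball[OF assms(1,2)] assms(3) by (intro closedin_diff) auto
  then have "compactin (tau A) (K \<inter> (topspace (tau A) - tball a (e/2)))"
    using assms(4) by (rule compact_Int_closedin[rotated])
  moreover have "K \<inter> (topspace (tau A) - tball a (e/2)) = C"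
    using compactin_subset_topspace[OF assms(4)] by (auto simp: C_def)
  ultimately have "closed C"
    using compact_if_compactin_tau[OF assms(1)] compact_imp_closed by auto
  moreover have "\<forall>d>0. \<exists>y\<in>C. dist y a < d"
    using tball_points_near_centre[of a e] assms(2,3,5) unfolding C_def by blast
  ultimately have "a \<in> C" using closed_approachable by blast
  then show False by (simp add: C_def tball_def)
qed

theorem mainTheorem3:
  fixes A :: "('a::euclidean_space \<times> real) set"
  assumes "A \<subseteq> Ln"
  shows "locally_compact_space (tau A) \<longleftrightarrow> A = Ln"
proof
  assume lc: "locally_compact_space (tau A)"
  show "A = Ln"
  proof (rule ccontr)
    assume "A \<noteq> Ln"
    then obtain a where a: "a \<in> Ln - A" using assms by blast
    then have "a \<in> topspace (tau A)" by (simp add: topspace_tau[OF assms] Xn_def)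
    then obtain U K where "openin (tau A) U" "compactin (tau A) K" "a \<in> U" "U \<subseteq> K"
      using lc unfolding locally_compact_space_def by blast
    moreover obtain e where "0 < e" "tball a e \<subseteq> U"
      using \<open>openin (tau A) U\<close> \<open>a \<in> U\<close> a by (auto simp: openin_tau[OF assms] tau_nbhd_def)
    ultimately show False
      using tball_not_subset_compactin[OF assms a] by blast
  qed
next
  assume "A = Ln"
  then show "locally_compact_space (tau A)"
    by (simp add: tau_Ln locally_compact_space_closed_subset[OF locally_compact_space_euclidean] closed_Xn)
qed

end
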